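(* Let $\lambda\in[0,1]$. For every $\alpha$ with $1\le\alpha<\max\left\{\frac{\sqrt{\lambda^2-2\lambda+5}-\lambda+1}{2},\frac{2(1-\lambda)}{2\lambda+1}\right\}$, there exists an instance with the weighted single metric loss with parameter $\lambda$ in which no clustering is in the $\alpha$-core.
   Context: Instance: finite nonempty set $\mathcal{N}$ of $n$ agents, finite nonempty set $\mathcal{M}$ of feasible centers, positive integer $k$, pseudometric $d$ on $\mathcal{N}\cup\mathcal{M}$. Weighted single metric loss: $\ell_i(C,x)=\lambda\max_{j\in C}d(i,j)+(1-\lambda)d(i,x)$ for $i\in C\subseteq\mathcal{N}$, $x\in\mathcal{M}$. A clustering is $\mathcal{X}=\{(C_1,x_1),\dots,(C_k,x_k)\}$ with $C_t$ pairwise disjoint (some possibly empty), union $\mathcal{N}$, $x_t\in\mathcal{M}$; $\ell_i(\mathcal{X})=\ell_i(C_t,x_t)$ where $i\in C_t$. For $\alpha\ge1$, $\mathcal{X}$ is in the $\alpha$-core if there is no $S\subseteq\mathcal{N}$ with $|S|\ge n/k$ and $y\in\mathcal{M}$ with $\alpha\,\ell_i(S,y)<\ell_i(\mathcal{X})$ for all $i\in S$. *)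

theory Defs
  imports "HOL-Analysis.Analysis"
begin

definition pseudometric_on :: "'p set \<Rightarrow> ('p \<Rightarrow> 'p \<Rightarrow> real) \<Rightarrow> bool" where
  "pseudometric_on P d \<longleftrightarrow>
     (\<forall>a\<in>P. d a a = 0) \<and>
     (\<forall>a\<in>P. \<forall>b\<in>P. d a b \<ge> 0 \<and> d a b = d b a) \<and>
     (\<forall>a\<in>P. \<forall>b\<in>P. \<forall>c\<in>P. d a c \<le> d a b + d b c)"

text \<open>An instance: agents N, feasible centers M, number k of clusters, pseudometric d on N \<union> M.\<close>
definition clust_instance :: "'p set \<Rightarrow> 'p set \<Rightarrow> nat \<Rightarrow> ('p \<Rightarrow> 'p \<Rightarrow> real) \<Rightarrow> bool" where
  "clust_instance N M k d \<longleftrightarrow> finite N \<and> N \<noteq> {} \<and> finite M \<and> M \<noteq> {} \<and> N \<inter> M = {} \<and> k > 0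
     \<and> pseudometric_on (N \<union> M) d"

definition wloss :: "real \<Rightarrow> ('p \<Rightarrow> 'p \<Rightarrow> real) \<Rightarrow> 'p \<Rightarrow> 'p set \<Rightarrow> 'p \<Rightarrow> real" where
  "wloss lam d i C x = lam * Max ((\<lambda>j. d i j) ` C) + (1 - lam) * d i x"

definition clustering :: "'p set \<Rightarrow> 'p set \<Rightarrow> nat \<Rightarrow> (nat \<Rightarrow> 'p set) \<Rightarrow> (nat \<Rightarrow> 'p) \<Rightarrow> bool" where
  "clustering N M k C c \<longleftrightarrow>
     (\<forall>t<k. \<forall>s<k. t \<noteq> s \<longrightarrow> C t \<inter> C s = {}) \<and>
     (\<Union>t<k. C t) = N \<and> (\<forall>t<k. c t \<in> M)"

definition clust_loss :: "real \<Rightarrow> ('p \<Rightarrow> 'p \<Rightarrow> real) \<Rightarrow> nat \<Rightarrow> (nat \<Rightarrow> 'p set) \<Rightarrow> (nat \<Rightarrow> 'p) \<Rightarrow> 'p \<Rightarrow> real" where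
  "clust_loss lam d k C c i = (let t = (THE t. t < k \<and> i \<in> C t) in wloss lam d i (C t) (c t))"

definition in_alpha_core :: "real \<Rightarrow> real \<Rightarrow> 'p set \<Rightarrow> 'p set \<Rightarrow> nat \<Rightarrow> ('p \<Rightarrow> 'p \<Rightarrow> real)
    \<Rightarrow> (nat \<Rightarrow> 'p set) \<Rightarrow> (nat \<Rightarrow> 'p) \<Rightarrow> bool" where
  "in_alpha_core lam \<alpha> N M k d C c \<longleftrightarrow>
     \<not> (\<exists>S y. S \<subseteq> N \<and> real (card S) \<ge> real (card N) / real k \<and> y \<in> M \<and>
            (\<forall>i\<in>S. \<alpha> * wloss lam d i S y < clust_loss lam d k C c i))"

end

(*
  Two copies of a six-point gadget (agents 0, 1, 2 and centres 3, 4, 5) are placed at a large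
  distance B from each other, with k = 3; since n / k = 2, every pair of agents may block.
  Three centres cannot put two into each copy, so some copy s contains at most one centre x.
  The agents of copy s served from the other copy pay at least (1 - lam) B, which exceeds
  alpha times any loss inside the gadget; those served at x form a set T and pay at least their
  loss in the partial cluster T.  Hence it suffices that for every x and T some pair S with a
  centre y of the gadget improves every agent of S inside T by the factor alpha.
  For alpha (2 lam + 1) < 2 (1 - lam) this holds for a gadget with cyclically arranged
  agent-centre distances 1, 4, 2; below the square-root bound it holds for an isosceles
  triangle with base 1 and suitable legs r.
*)

theory Submission
  imports Defs
begin

definition glue :: "nat \<Rightarrow> (nat \<Rightarrow> nat \<Rightarrow> real) \<Rightarrow> real \<Rightarrow> nat \<Rightarrow> nat \<Rightarrow> real" where
  "glue m \<delta> B p q = (if p div m = q div m then \<delta> (p mod m) (q mod m) else B)"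

lemma pseudometric_on_subset:
  "pseudometric_on P d \<Longrightarrow> Q \<subseteq> P \<Longrightarrow> pseudometric_on Q d"
  unfolding pseudometric_on_def by blast

lemma pseudometric_glue:
  assumes \<delta>: "pseudometric_on {..<m} \<delta>" and "0 < m" and diam: "\<forall>p<m. \<forall>q<m. \<delta> p q \<le> B"
  shows "pseudometric_on UNIV (glue m \<delta> B)"
proof -
  let ?i = "\<lambda>p. p mod m"
  have mod_lt: "?i p < m" for p using \<open>0 < m\<close> by simp
  have refl: "\<delta> (?i p) (?i p) = 0"
    and nonneg: "0 \<le> \<delta> (?i p) (?i q)"
    and sym: "\<delta> (?i p) (?i q) = \<delta> (?i q) (?i p)"
    and tri: "\<delta> (?i p) (?i u) \<le> \<delta> (?i p) (?i q) + \<delta> (?i q) (?i u)"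
    and le_B: "\<delta> (?i p) (?i q) \<le> B" for p q u
    using \<delta> diam mod_lt unfolding pseudometric_on_def by (meson lessThan_iff)+
  have "0 \<le> B" using nonneg le_B order_trans by blast
  have "glue m \<delta> B a u \<le> glue m \<delta> B a b + glue m \<delta> B b u" for a b u
    using tri nonneg le_B \<open>0 \<le> B\<close> unfolding glue_def by (smt (verit))
  then show ?thesis
    using refl nonneg sym \<open>0 \<le> B\<close> unfolding glue_def pseudometric_on_def by auto
qed

lemma wloss_lower:
  assumes "finite C" "j \<in> C" "0 \<le> lam"
  shows "lam * d i j + (1 - lam) * d i x \<le> wloss lam d i C x"
  using assms unfolding wloss_def by (simp add: mult_left_mono)

lemma wloss_mono:
  assumes "finite C" "C' \<subseteq> C" "i \<in> C'" "0 \<le> lam"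
  shows "wloss lam d i C' x \<le> wloss lam d i C x"
proof -
  have "Max ((\<lambda>j. d i j) ` C') \<le> Max ((\<lambda>j. d i j) ` C)"
    using assms by (intro Max_mono image_mono) auto
  then show ?thesis unfolding wloss_def using \<open>0 \<le> lam\<close> by (simp add: mult_left_mono)
qed

lemma wloss_le:
  assumes "finite C" "C \<noteq> {}" "0 \<le> lam" "lam \<le> 1" "\<forall>j\<in>C. d i j \<le> K" "d i x \<le> K"
  shows "wloss lam d i C x \<le> K"
proof -
  have "Max ((\<lambda>j. d i j) ` C) \<le> K" using assms by simp
  then have "wloss lam d i C x \<le> lam * K + (1 - lam) * K"
    unfolding wloss_def using assms by (intro add_mono mult_left_mono) auto
  then show ?thesis by (simp add: algebra_simps)
qed

lemma wloss_pair_less_wloss: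
  assumes "finite T" "0 \<le> lam" "k \<in> T"
    and "\<alpha> * (lam * max (d i j) (d i j') + (1 - lam) * d i y) < lam * d i k + (1 - lam) * d i z"
  shows "\<alpha> * wloss lam d i {j, j'} y < wloss lam d i T z"
  using wloss_lower[OF assms(1,3,2), of d i z] assms(4) unfolding wloss_def by simp

lemma wloss_glue_copy:
  assumes "T \<subseteq> {..<m}" "i < m" "x < m"
  shows "wloss lam (glue m \<delta> B) (m * s + i) ((+) (m * s) ` T) (m * s + x) = wloss lam \<delta> i T x"
proof -
  have "(\<lambda>j. glue m \<delta> B (m * s + i) j) ` (+) (m * s) ` T = (\<lambda>j. \<delta> i j) ` T"
    unfolding image_image using assms by (intro image_cong) (auto simp: glue_def)
  then show ?thesis using assms by (simp add: wloss_def glue_def)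
qed

lemma wloss_glue_copy_le:
  assumes "finite C" "(+) (m * s) ` T \<subseteq> C" "T \<subseteq> {..<m}" "i \<in> T" "x < m" "0 \<le> lam"
  shows "wloss lam \<delta> i T x \<le> wloss lam (glue m \<delta> B) (m * s + i) C (m * s + x)"
proof -
  have "wloss lam \<delta> i T x = wloss lam (glue m \<delta> B) (m * s + i) ((+) (m * s) ` T) (m * s + x)"
    using assms by (intro wloss_glue_copy[symmetric]) auto
  also have "\<dots> \<le> wloss lam (glue m \<delta> B) (m * s + i) C (m * s + x)"
    using assms by (intro wloss_mono) auto
  finally show ?thesis .
qed

lemma wloss_glue_other_copy:
  assumes "finite C" "p \<in> C" "0 \<le> lam" "p div m \<noteq> z div m" "\<delta> (p mod m) (p mod m) = 0"
  shows "(1 - lam) * B \<le> wloss lam (glue m \<delta> B) p C z"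
  using wloss_lower[OF assms(1-3), of "glue m \<delta> B" p z] assms(4,5) by (simp add: glue_def)

lemma clust_loss_eq:
  assumes "clustering N M k C c" "t < k" "i \<in> C t"
  shows "clust_loss lam d k C c i = wloss lam d i (C t) (c t)"
proof -
  have "(THE t. t < k \<and> i \<in> C t) = t"
    using assms unfolding clustering_def by (intro the_equality) blast+
  then show ?thesis unfolding clust_loss_def by simp
qed

lemma clustering_assignment:
  assumes cl: "clustering N M k C c" and "finite N"
  obtains \<tau> where "\<And>p. p \<in> N \<Longrightarrow> \<tau> p < k \<and> p \<in> C (\<tau> p)"
    and "\<And>lam d p. p \<in> N \<Longrightarrow> clust_loss lam d k C c p = wloss lam d p (C (\<tau> p)) (c (\<tau> p))"
    and "\<And>t. t < k \<Longrightarrow> finite (C t)"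
proof -
  have cover: "(\<Union>t<k. C t) = N" using cl unfolding clustering_def by blast
  then have "\<forall>p\<in>N. \<exists>t<k. p \<in> C t" by blast
  then obtain \<tau> where "\<And>p. p \<in> N \<Longrightarrow> \<tau> p < k \<and> p \<in> C (\<tau> p)" by metis
  moreover have "\<And>t. t < k \<Longrightarrow> finite (C t)"
    using cover \<open>finite N\<close> by (metis UN_upper finite_subset lessThan_iff)
  ultimately show thesis using that clust_loss_eq[OF cl] by metis
qed

lemma exists_colour_used_at_most_once:
  fixes f :: "nat \<Rightarrow> nat"
  assumes "\<forall>t<3. f t < 2"
  obtains s where "s < 2" "\<And>t t'. t < 3 \<Longrightarrow> t' < 3 \<Longrightarrow> f t = s \<Longrightarrow> f t' = s \<Longrightarrow> t = t'"
proof -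
  have "f 0 < 2" "f 1 < 2" "f 2 < 2" using assms by auto
  have less3: "t < 3 \<longleftrightarrow> t = 0 \<or> t = 1 \<or> t = (2::nat)" for t by auto
  have "\<exists>s<2. \<forall>t<3. \<forall>t'<3. f t = s \<longrightarrow> f t' = s \<longrightarrow> t = t'"
    unfolding less3 using \<open>f 0 < 2\<close> \<open>f 1 < 2\<close> \<open>f 2 < 2\<close> by presburger
  then show ?thesis using that by blast
qed

lemma glued_copy_with_one_local_cluster:
  fixes c :: "nat \<Rightarrow> nat"
  assumes cl: "clustering {0,1,2,6,7,8} {3,4,5,9,10,11} 3 C c"
  obtains s x t0 where "s < 2" "x \<in> {3,4,5}"
    "\<And>t. t < 3 \<Longrightarrow> c t div 6 = s \<Longrightarrow> t = t0 \<and> c t0 = 6 * s + x"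
proof -
  have centers: "\<forall>t<3. c t \<in> {3,4,5,9,10,11}" using cl unfolding clustering_def by blast
  then have "\<forall>t<3. c t div 6 < 2" by auto
  then obtain s where "s < 2"
    and unique: "\<And>t t'. t < 3 \<Longrightarrow> t' < 3 \<Longrightarrow> c t div 6 = s \<Longrightarrow> c t' div 6 = s \<Longrightarrow> t = t'"
    by (rule exists_colour_used_at_most_once) blast
  show thesis
  proof (cases "\<exists>t<3. c t div 6 = s")
    case True
    then obtain t0 where "t0 < 3" "c t0 div 6 = s" by blast
    moreover have "c t0 \<in> {3,4,5,9,10,11}" using centers \<open>t0 < 3\<close> by blast
    ultimately have "c t0 = 6 * s + c t0 mod 6" and "c t0 mod 6 \<in> {3,4,5}" by auto
    moreover have "t = t0" if "t < 3" "c t div 6 = s" for t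
      using unique that \<open>t0 < 3\<close> \<open>c t0 div 6 = s\<close> by blast
    ultimately show thesis using that[of s "c t0 mod 6" t0] \<open>s < 2\<close> by blast
  next
    case False
    then show thesis using that[of s 3 0] \<open>s < 2\<close> by blast
  qed
qed

lemma glued_clustering_loss_bounds:
  assumes cl: "clustering {0,1,2,6,7,8} {3,4,5,9,10,11} 3 C c"
    and "0 \<le> lam" and \<delta>0: "\<forall>q<6. \<delta> q q = 0"
  obtains s x T where "s < 2" "x \<in> {3,4,5}" "T \<subseteq> {0,1,2}"
    "\<And>i. i \<in> T \<Longrightarrow> wloss lam \<delta> i T x \<le> clust_loss lam (glue 6 \<delta> B) 3 C c (6 * s + i)"
    "\<And>i. i \<in> {0,1,2} - T \<Longrightarrow> (1 - lam) * B \<le> clust_loss lam (glue 6 \<delta> B) 3 C c (6 * s + i)"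
proof -
  let ?N = "{0,1,2,6,7,8} :: nat set" and ?d = "glue 6 \<delta> B"
  obtain \<tau> where \<tau>: "\<And>p. p \<in> ?N \<Longrightarrow> \<tau> p < 3 \<and> p \<in> C (\<tau> p)"
    and loss: "\<And>p. p \<in> ?N \<Longrightarrow> clust_loss lam ?d 3 C c p = wloss lam ?d p (C (\<tau> p)) (c (\<tau> p))"
    and fin: "\<And>t. t < 3 \<Longrightarrow> finite (C t)"
    using clustering_assignment[OF cl] by (metis finite.emptyI finite.insertI)
  obtain s x t0 where "s < 2" "x \<in> {3,4,5}"
    and local: "\<And>t. t < 3 \<Longrightarrow> c t div 6 = s \<Longrightarrow> t = t0 \<and> c t0 = 6 * s + x"
    using glued_copy_with_one_local_cluster[OF cl] by blast
  define T where "T = {i \<in> {0,1,2}. c (\<tau> (6 * s + i)) div 6 = s}"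
  have agent: "6 * s + i \<in> ?N" if "i \<in> {0,1,2}" for i
    using that \<open>s < 2\<close> by (auto simp: less_2_cases_iff)
  have served: "\<tau> (6 * s + i) = t0" "c t0 = 6 * s + x" if "i \<in> T" for i
    using local \<tau> agent that unfolding T_def by blast+
  show thesis
  proof (rule that)
    show "s < 2" "x \<in> {3,4,5}" by fact+
    show "T \<subseteq> {0,1,2}" unfolding T_def by blast
  next
    fix i assume "i \<in> T"
    then have p: "6 * s + i \<in> ?N" using agent T_def by simp
    then have "t0 < 3" using \<tau> served[OF \<open>i \<in> T\<close>] by metis
    have "(+) (6 * s) ` T \<subseteq> C t0"
      using \<tau> agent served unfolding T_def by (smt (verit) image_subsetI mem_Collect_eq)
    then have "wloss lam \<delta> i T x \<le> wloss lam ?d (6 * s + i) (C t0) (6 * s + x)"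
      using fin[OF \<open>t0 < 3\<close>] \<open>i \<in> T\<close> \<open>x \<in> {3,4,5}\<close> \<open>0 \<le> lam\<close>
      by (intro wloss_glue_copy_le) (auto simp: T_def)
    then show "wloss lam \<delta> i T x \<le> clust_loss lam ?d 3 C c (6 * s + i)"
      using loss[OF p] served[OF \<open>i \<in> T\<close>] by simp
  next
    fix i assume i: "i \<in> {0,1,2} - T"
    then have "(6 * s + i) div 6 \<noteq> c (\<tau> (6 * s + i)) div 6" unfolding T_def by auto
    then show "(1 - lam) * B \<le> clust_loss lam ?d 3 C c (6 * s + i)"
      using wloss_glue_other_copy[OF fin, of "\<tau> (6 * s + i)" "6 * s + i"] loss \<tau> agent i \<delta>0 \<open>0 \<le> lam\<close>
      by auto
  qed
qed

text \<open>Only the members of S served at x are constrained: in the glued instance the others are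
  served from the far copy and gain anyway.\<close>
definition gadget_blocks :: "real \<Rightarrow> real \<Rightarrow> (nat \<Rightarrow> nat \<Rightarrow> real) \<Rightarrow> bool" where
  "gadget_blocks lam \<alpha> \<delta> \<longleftrightarrow>
     (\<forall>x\<in>{3,4,5}. \<forall>T\<subseteq>{0,1,2}. \<exists>S\<subseteq>{0,1,2}. 2 \<le> card S \<and>
        (\<exists>y\<in>{3,4,5}. \<forall>i\<in>S \<inter> T. \<alpha> * wloss lam \<delta> i S y < wloss lam \<delta> i T x))"

lemma glued_not_in_alpha_core:
  assumes "0 \<le> lam" "lam \<le> 1" "0 \<le> \<alpha>"
    and \<delta>: "pseudometric_on {..<6} \<delta>" and diam: "\<forall>p<6. \<forall>q<6. \<delta> p q \<le> K"
    and far: "\<alpha> * K < (1 - lam) * B"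
    and blocks: "gadget_blocks lam \<alpha> \<delta>"
    and cl: "clustering {0,1,2,6,7,8} {3,4,5,9,10,11} 3 C c"
  shows "\<not> in_alpha_core lam \<alpha> {0,1,2,6,7,8} {3,4,5,9,10,11} 3 (glue 6 \<delta> B) C c"
proof -
  let ?d = "glue 6 \<delta> B"
  have "\<forall>q<6. \<delta> q q = 0" using \<delta> unfolding pseudometric_on_def by simp
  then obtain s x T where "s < 2" "x \<in> {3,4,5}" "T \<subseteq> {0,1,2}"
    and in_T: "\<And>i. i \<in> T \<Longrightarrow> wloss lam \<delta> i T x \<le> clust_loss lam ?d 3 C c (6 * s + i)"
    and off_T: "\<And>i. i \<in> {0,1,2} - T \<Longrightarrow> (1 - lam) * B \<le> clust_loss lam ?d 3 C c (6 * s + i)"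
    using glued_clustering_loss_bounds[OF cl \<open>0 \<le> lam\<close>] by metis
  then obtain S y where S: "S \<subseteq> {0,1,2}" "2 \<le> card S" and "y \<in> {3,4,5}"
    and gain: "\<And>i. i \<in> S \<inter> T \<Longrightarrow> \<alpha> * wloss lam \<delta> i S y < wloss lam \<delta> i T x"
    using blocks unfolding gadget_blocks_def by meson
  let ?S = "(+) (6 * s) ` S"
  have "\<alpha> * wloss lam ?d p ?S (6 * s + y) < clust_loss lam ?d 3 C c p" if "p \<in> ?S" for p
  proof -
    obtain i where "i \<in> S" and p: "p = 6 * s + i" using \<open>p \<in> ?S\<close> by blast
    have "finite S" using S finite_subset by blast
    have lt6: "j < 6" if "j \<in> S" for j using S that by auto
    have new: "wloss lam ?d p ?S (6 * s + y) = wloss lam \<delta> i S y"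
      unfolding p using S \<open>i \<in> S\<close> \<open>y \<in> {3,4,5}\<close> by (intro wloss_glue_copy) auto
    show ?thesis
    proof (cases "i \<in> T")
      case True
      then show ?thesis using gain[of i] in_T[of i] new p \<open>i \<in> S\<close> by simp
    next
      case False
      have "wloss lam \<delta> i S y \<le> K"
        using \<open>finite S\<close> \<open>i \<in> S\<close> lt6 diam \<open>y \<in> {3,4,5}\<close> \<open>0 \<le> lam\<close> \<open>lam \<le> 1\<close>
        by (intro wloss_le) auto
      then have "\<alpha> * wloss lam \<delta> i S y \<le> \<alpha> * K" using \<open>0 \<le> \<alpha>\<close> by (rule mult_left_mono)
      then show ?thesis using far off_T[of i] False new p \<open>i \<in> S\<close> S by auto
    qed
  qed
  moreover have "real (card {0,1,2,6,7,8::nat}) / real 3 \<le> real (card ?S)"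
    using \<open>2 \<le> card S\<close> by (simp add: card_image)
  moreover have "?S \<subseteq> {0,1,2,6,7,8}" and "6 * s + y \<in> {3,4,5,9,10,11}"
    using S \<open>s < 2\<close> \<open>y \<in> {3,4,5}\<close> by (auto simp: less_2_cases_iff)
  ultimately show ?thesis unfolding in_alpha_core_def by blast
qed

lemma instance_without_alpha_core_from_gadget:
  assumes "0 \<le> lam" "lam < 1" "0 \<le> \<alpha>"
    and \<delta>: "pseudometric_on {..<6} \<delta>" and diam: "\<forall>p<6. \<forall>q<6. \<delta> p q \<le> K"
    and blocks: "gadget_blocks lam \<alpha> \<delta>"
  shows "\<exists>(N :: nat set) M k d. clust_instance N M k d \<and>
           (\<forall>C c. clustering N M k C c \<longrightarrow> \<not> in_alpha_core lam \<alpha> N M k d C c)"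
proof -
  have "0 \<le> K" using \<delta> diam unfolding pseudometric_on_def by force
  define B where "B = (\<alpha> * K + 1) / (1 - lam) + K"
  have "(1 - lam) * B = \<alpha> * K + 1 + (1 - lam) * K"
    unfolding B_def using \<open>lam < 1\<close> by (simp add: field_simps)
  then have far: "\<alpha> * K < (1 - lam) * B"
    using \<open>0 \<le> K\<close> \<open>lam < 1\<close> by (smt (verit) mult_nonneg_nonneg)
  have "K \<le> B" unfolding B_def using \<open>0 \<le> K\<close> \<open>0 \<le> \<alpha>\<close> \<open>lam < 1\<close> by simp
  then have "\<forall>p<6. \<forall>q<6. \<delta> p q \<le> B" using diam by force
  then have "pseudometric_on UNIV (glue 6 \<delta> B)" by (intro pseudometric_glue[OF \<delta>]) auto
  then have "clust_instance {0,1,2,6,7,8} {3,4,5,9,10,11} 3 (glue 6 \<delta> B)"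
    unfolding clust_instance_def by (simp add: pseudometric_on_subset[of UNIV])
  moreover have "\<not> in_alpha_core lam \<alpha> {0,1,2,6,7,8} {3,4,5,9,10,11} 3 (glue 6 \<delta> B) C c"
    if "clustering {0,1,2,6,7,8} {3,4,5,9,10,11} 3 C c" for C c
    using glued_not_in_alpha_core[OF \<open>0 \<le> lam\<close> _ \<open>0 \<le> \<alpha>\<close> \<delta> diam far blocks that] \<open>lam < 1\<close>
    by simp
  ultimately show ?thesis by blast
qed

lemma lessThan_6: "{..<6::nat} = {0,1,2,3,4,5}" by auto

definition cyclic_gadget :: "nat \<Rightarrow> nat \<Rightarrow> real" where
  "cyclic_gadget p q =
     [[0, 3, 3, 1, 4, 2],
      [3, 0, 3, 2, 1, 4],
      [3, 3, 0, 4, 2, 1],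
      [1, 2, 4, 0, 3, 3],
      [4, 1, 2, 3, 0, 3],
      [2, 4, 1, 3, 3, 0]] ! p ! q"

lemma pseudometric_cyclic_gadget: "pseudometric_on {..<6} cyclic_gadget"
  unfolding pseudometric_on_def lessThan_6 by (simp add: cyclic_gadget_def)

lemma cyclic_gadget_le_4: "\<forall>p<6. \<forall>q<6. cyclic_gadget p q \<le> 4"
  unfolding lessThan_iff[symmetric] lessThan_6 by (simp add: cyclic_gadget_def)

text \<open>If x serves, the two agents other than \<open>x - 3\<close> move to the next centre together: their
  distance to the centre drops from 2 to 1 or from 4 to 2, while their mutual distance is 3.\<close>
lemma gadget_blocks_cyclic:
  assumes "0 \<le> lam" "0 \<le> \<alpha>" and bound: "\<alpha> * (2 * lam + 1) < 2 * (1 - lam)"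
  shows "gadget_blocks lam \<alpha> cyclic_gadget"
  unfolding gadget_blocks_def
proof (intro ballI allI impI)
  fix x :: nat and T :: "nat set"
  assume x: "x \<in> {3,4,5}" and T: "T \<subseteq> {0,1,2}"
  have "finite T" using T finite_subset by blast
  have "\<alpha> * (lam + 2) < 4 * (1 - lam)"
    using bound mult_nonneg_nonneg[OF assms(2,1)] by (simp add: algebra_simps)
  note gain = wloss_pair_less_wloss[OF \<open>finite T\<close> \<open>0 \<le> lam\<close>]
  from x consider "x = 3" | "x = 4" | "x = 5" by blast
  then show "\<exists>S\<subseteq>{0,1,2}. 2 \<le> card S \<and>
      (\<exists>y\<in>{3,4,5}. \<forall>i\<in>S \<inter> T. \<alpha> * wloss lam cyclic_gadget i S y < wloss lam cyclic_gadget i T x)"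
  proof cases
    case 1
    then show ?thesis using bound \<open>\<alpha> * (lam + 2) < 4 * (1 - lam)\<close>
      by (intro exI[of _ "{1,2}"] conjI bexI[of _ 4])
        (auto simp: cyclic_gadget_def algebra_simps intro!: gain)
  next
    case 2
    then show ?thesis using bound \<open>\<alpha> * (lam + 2) < 4 * (1 - lam)\<close>
      by (intro exI[of _ "{0,2}"] conjI bexI[of _ 5])
        (auto simp: cyclic_gadget_def algebra_simps intro!: gain)
  next
    case 3
    then show ?thesis using bound \<open>\<alpha> * (lam + 2) < 4 * (1 - lam)\<close>
      by (intro exI[of _ "{0,1}"] conjI bexI[of _ 3])
        (auto simp: cyclic_gadget_def algebra_simps intro!: gain)
  qed
qed

text \<open>Agents 0, 1, 2 and centres 3, 4, 5 sit at the vertices a, b, c, a, c, a of a triangle with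
  \<open>|ac| = 1\<close> and \<open>|ab| = |bc| = r\<close>.\<close>
definition isosceles_gadget :: "real \<Rightarrow> nat \<Rightarrow> nat \<Rightarrow> real" where
  "isosceles_gadget r p q =
     [[0, r, 1, 0, 1, 0],
      [r, 0, r, r, r, r],
      [1, r, 0, 1, 0, 1],
      [0, r, 1, 0, 1, 0],
      [1, r, 0, 1, 0, 1],
      [0, r, 1, 0, 1, 0]] ! p ! q"

lemma pseudometric_isosceles_gadget:
  "1 \<le> r \<Longrightarrow> pseudometric_on {..<6} (isosceles_gadget r)"
  unfolding pseudometric_on_def lessThan_6 by (simp add: isosceles_gadget_def)

lemma isosceles_gadget_le: "1 \<le> r \<Longrightarrow> \<forall>p<6. \<forall>q<6. isosceles_gadget r p q \<le> r"
  unfolding lessThan_iff[symmetric] lessThan_6 by (simp add: isosceles_gadget_def)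

lemma gadget_blocks_isosceles:
  assumes "0 \<le> lam" "1 \<le> r"
    and c1: "\<alpha> < lam * r + 1 - lam" and c2: "\<alpha> * lam < lam * r" and c3: "\<alpha> * lam * r < 1"
  shows "gadget_blocks lam \<alpha> (isosceles_gadget r)"
  unfolding gadget_blocks_def
proof (intro ballI allI impI)
  fix x :: nat and T :: "nat set"
  assume x: "x \<in> {3,4,5}" and T: "T \<subseteq> {0,1,2}"
  let ?\<delta> = "isosceles_gadget r"
  have "finite T" using T finite_subset by blast
  note gain = wloss_pair_less_wloss[OF \<open>finite T\<close> \<open>0 \<le> lam\<close>]
  have max_r: "max 0 r = r" "max r 0 = r" using \<open>1 \<le> r\<close> by auto
  consider "1 \<in> T" | "1 \<notin> T" "x = 4" "2 \<in> T" | "1 \<notin> T" "x \<noteq> 4" "0 \<in> T"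
    | "1 \<notin> T" "(if x = 4 then 2 else 0) \<notin> T"
    by (cases "x = 4") auto
  then show "\<exists>S\<subseteq>{0,1,2}. 2 \<le> card S \<and>
      (\<exists>y\<in>{3,4,5}. \<forall>i\<in>S \<inter> T. \<alpha> * wloss lam ?\<delta> i S y < wloss lam ?\<delta> i T x)"
  proof cases
    case 1
    then show ?thesis using x c1 c2
      by (intro exI[of _ "{0,2}"] conjI bexI[of _ x])
        (auto simp: isosceles_gadget_def algebra_simps intro!: gain[where k = 1])
  next
    case 2
    then show ?thesis using c3
      by (intro exI[of _ "{0,1}"] conjI bexI[of _ 3])
        (auto simp: isosceles_gadget_def algebra_simps max_r intro!: gain[where k = 2])
  next
    case 3
    then show ?thesis using x c3
      by (intro exI[of _ "{1,2}"] conjI bexI[of _ 4])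
        (auto simp: isosceles_gadget_def algebra_simps max_r intro!: gain[where k = 0])
  next
    case 4
    then show ?thesis by (intro exI[of _ "{1, if x = 4 then 2 else 0}"] conjI bexI[of _ 3]) auto
  qed
qed

lemma below_sqrt_bound:
  fixes lam \<alpha> :: real
  assumes "0 \<le> lam" "1 \<le> \<alpha>" "\<alpha> < (sqrt (lam\<^sup>2 - 2 * lam + 5) - lam + 1) / 2"
  shows "\<alpha> * (\<alpha> - 1 + lam) < 1" and "lam < 1"
proof -
  have "0 \<le> 2 * \<alpha> + lam - 1" and "2 * \<alpha> + lam - 1 < sqrt (lam\<^sup>2 - 2 * lam + 5)"
    using assms by auto
  then have "sqrt ((2 * \<alpha> + lam - 1)\<^sup>2) < sqrt (lam\<^sup>2 - 2 * lam + 5)" by simp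
  then have "(2 * \<alpha> + lam - 1)\<^sup>2 < lam\<^sup>2 - 2 * lam + 5" by (simp only: real_sqrt_less_iff)
  then show quadratic: "\<alpha> * (\<alpha> - 1 + lam) < 1" by (simp add: power2_eq_square algebra_simps)
  have "lam \<le> \<alpha> * (\<alpha> - 1 + lam)"
    using assms mult_mono[of 1 \<alpha> lam "\<alpha> - 1 + lam"] by (simp add: algebra_simps)
  then show "lam < 1" using quadratic by linarith
qed

lemma isosceles_ratio_exists:
  fixes lam \<alpha> :: real
  assumes "0 < lam" "lam < 1" "1 \<le> \<alpha>" and quadratic: "\<alpha> * (\<alpha> - 1 + lam) < 1"
  obtains r where "1 \<le> r" "\<alpha> < lam * r + 1 - lam" "\<alpha> * lam < lam * r" "\<alpha> * lam * r < 1"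
proof
  \<comment> \<open>\<open>lam * r\<close> is the midpoint between \<open>\<alpha> - 1 + lam\<close> and \<open>1 / \<alpha>\<close>, which the quadratic bound separates\<close>
  define r where "r = (\<alpha> - 1 + lam + 1 / \<alpha>) / (2 * lam)"
  have lam_r: "lam * r = (\<alpha> - 1 + lam + 1 / \<alpha>) / 2" unfolding r_def using \<open>0 < lam\<close> by simp
  have "\<alpha> - 1 + lam < 1 / \<alpha>" using quadratic \<open>1 \<le> \<alpha>\<close> by (simp add: field_simps)
  then have lower: "\<alpha> - 1 + lam < lam * r" and upper: "lam * r < 1 / \<alpha>"
    unfolding lam_r by auto
  show "\<alpha> < lam * r + 1 - lam" using lower by linarith
  have "0 \<le> (\<alpha> - 1) * (1 - lam)" using assms by simp
  then have "\<alpha> * lam \<le> \<alpha> - 1 + lam" by (simp add: algebra_simps)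
  then show "\<alpha> * lam < lam * r" using lower by linarith
  moreover have "lam \<le> \<alpha> * lam" using assms by simp
  ultimately have "lam * 1 < lam * r" by linarith
  then show "1 \<le> r" using \<open>0 < lam\<close> by simp
  have "\<alpha> * (lam * r) < \<alpha> * (1 / \<alpha>)" using upper \<open>1 \<le> \<alpha>\<close> by (intro mult_strict_left_mono) auto
  then show "\<alpha> * lam * r < 1" using \<open>1 \<le> \<alpha>\<close> by (simp add: mult.assoc)
qed

lemma above_cyclic_bound:
  fixes lam \<alpha> :: real
  assumes "0 \<le> lam" "1 \<le> \<alpha>"
    and "\<alpha> < max ((sqrt (lam\<^sup>2 - 2 * lam + 5) - lam + 1) / 2) (2 * (1 - lam) / (2 * lam + 1))"
    and "\<not> \<alpha> * (2 * lam + 1) < 2 * (1 - lam)"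
  shows "0 < lam" "lam < 1" "\<alpha> * (\<alpha> - 1 + lam) < 1"
proof -
  have "2 * (1 - lam) / (2 * lam + 1) \<le> \<alpha>" using assms by (simp add: divide_le_eq)
  then have below: "\<alpha> < (sqrt (lam\<^sup>2 - 2 * lam + 5) - lam + 1) / 2" using assms(3) by linarith
  then show "lam < 1" "\<alpha> * (\<alpha> - 1 + lam) < 1" using below_sqrt_bound[OF assms(1,2)] by auto
  show "0 < lam"
  proof (rule ccontr)
    assume "\<not> 0 < lam"
    then have "lam = 0" using assms by simp
    have "sqrt 5 < 3" by (rule real_less_lsqrt) auto
    then show False using below \<open>2 * (1 - lam) / (2 * lam + 1) \<le> \<alpha>\<close> \<open>lam = 0\<close> by simp
  qed
qed

theorem mainTheorem11:
  fixes lam \<alpha> :: real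
  assumes "0 \<le> lam" and "lam \<le> 1"
    and "1 \<le> \<alpha>"
    and "\<alpha> < max ((sqrt (lam\<^sup>2 - 2 * lam + 5) - lam + 1) / 2) (2 * (1 - lam) / (2 * lam + 1))"
  shows "\<exists>(N :: nat set) M k d. clust_instance N M k d \<and>
           (\<forall>C c. clustering N M k C c \<longrightarrow> \<not> in_alpha_core lam \<alpha> N M k d C c)"
proof (cases "\<alpha> * (2 * lam + 1) < 2 * (1 - lam)")
  case True
  then have "lam < 1" using assms by (smt (verit) mult_nonneg_nonneg)
  then show ?thesis
    using instance_without_alpha_core_from_gadget[OF \<open>0 \<le> lam\<close> _ _ pseudometric_cyclic_gadget
        cyclic_gadget_le_4 gadget_blocks_cyclic[OF \<open>0 \<le> lam\<close> _ True]] \<open>1 \<le> \<alpha>\<close>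
    by simp
next
  case False
  then have "0 < lam" "lam < 1" and quadratic: "\<alpha> * (\<alpha> - 1 + lam) < 1"
    using above_cyclic_bound[OF assms(1,3,4)] by auto
  then obtain r where "1 \<le> r" "\<alpha> < lam * r + 1 - lam" "\<alpha> * lam < lam * r" "\<alpha> * lam * r < 1"
    using isosceles_ratio_exists assms(3) by blast
  then show ?thesis
    using instance_without_alpha_core_from_gadget[OF assms(1) \<open>lam < 1\<close> _
        pseudometric_isosceles_gadget isosceles_gadget_le gadget_blocks_isosceles] assms(1,3)
    by simp
qed

end
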